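(* For every $X\in\mathcal{W}_4^3$ and every $0\le j\le 2$, $\tilde H_j(X;\mathbb{Z})=0$.
   Context: $\mathbb{I}_n$ is the hypercube graph on $\{0,1\}^n$ with Hamming distance; $\mathcal{VR}(G;3)$ is the simplicial complex of vertex sets of pairwise Hamming distance $\le 3$. For distinct $j_1,\dots,j_t\in[n]$ and $\epsilon_1,\dots,\epsilon_t\in\{0,1\}$, $\mathbb{I}_n^{(j_1,\epsilon_1),\dots,(j_t,\epsilon_t)}$ is the induced subgraph on $\{v: v(j_l)=\epsilon_l,\ 1\le l\le t\}$; an $m$-dimensional cube subgraph is one of these with $t=n-m$ (with $t=0$ giving $\mathbb{I}_n$). For such $H$ and $\lambda\notin\{j_1,\dots,j_t\}$, $\epsilon\in\{0,1\}$, $H^{(\lambda,\epsilon)}$ is the induced subgraph of $H$ on vertices with $v(\lambda)=\epsilon$, and $\partial(\mathcal{VR}(H;3))=\bigcup_{\lambda\notin\{j_l\},\epsilon}\mathcal{VR}(H^{(\lambda,\epsilon)};3)$. For $n\ge4$ and $3\le m\le n$, $\mathcal{W}_n^m$ is the collection of all finite unions $X=X_1\cup\dots\cup X_k$ ($k\ge1$) such that: each $X_j=\mathcal{VR}(H_j;3)$ for some $m$-dimensional cube subgraph $H_j$ of $\mathbb{I}_n$; and if $m\ne n$, then $X\subseteq\mathcal{VR}(H;3)$ for some $(m+1)$-dimensional cube subgraph $H=\mathbb{I}_n^{(j_1,\epsilon_1),\dots,(j_{n-m-1},\epsilon_{n-m-1})}$, and moreover if $X\ne\partial(\mathcal{VR}(H;3))$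 then there exist $\lambda\in[n]\setminus\{j_1,\dots,j_{n-m-1}\}$ and $\epsilon\in\{0,1\}$ with $\mathcal{VR}(H^{(\lambda,\epsilon)};3)\subseteq X$ and $\mathcal{VR}(H^{(\lambda,1-\epsilon)};3)\not\subseteq X$. $\tilde H_j$ is reduced simplicial homology. *)

theory Defs
  imports Main
begin

text \<open>Vertices of the hypercube I_n are encoded as natural numbers v < 2^n;
  coordinate j (0 \<le> j < n) of v is bit v j.\<close>

definition hamming :: "nat \<Rightarrow> nat \<Rightarrow> nat \<Rightarrow> nat" where
  "hamming n a b = card {j. j < n \<and> bit a j \<noteq> bit b j}"

text \<open>A cube subgraph is specified by a set F of pairs (coordinate, fixed value)
  with distinct coordinates in [n]; it is m-dimensional iff card F = n - m.\<close>

definition cube_spec :: "nat \<Rightarrow> nat \<Rightarrow> (nat \<times> bool) set \<Rightarrow> bool" where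
  "cube_spec n m F \<longleftrightarrow> m \<le> n \<and> finite F \<and> fst ` F \<subseteq> {..<n} \<and> inj_on fst F \<and> card F = n - m"

definition subcube :: "nat \<Rightarrow> (nat \<times> bool) set \<Rightarrow> nat set" where
  "subcube n F = {v. v < 2 ^ n \<and> (\<forall>(j, e) \<in> F. bit v j = e)}"

definition VR :: "nat \<Rightarrow> nat \<Rightarrow> nat set \<Rightarrow> nat set set" where
  "VR n d V = {\<sigma>. \<sigma> \<noteq> {} \<and> finite \<sigma> \<and> \<sigma> \<subseteq> V \<and> (\<forall>a\<in>\<sigma>. \<forall>b\<in>\<sigma>. hamming n a b \<le> d)}"

definition cube_boundary :: "nat \<Rightarrow> (nat \<times> bool) set \<Rightarrow> nat set set" where
  "cube_boundary n F = \<Union> {VR n 3 (subcube n (insert (l, e) F)) | l e. l < n \<and> l \<notin> fst ` F}"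

definition W :: "nat \<Rightarrow> nat \<Rightarrow> nat set set set" where
  "W n m = {X. \<exists>S. finite S \<and> S \<noteq> {} \<and> (\<forall>F\<in>S. cube_spec n m F)
     \<and> X = (\<Union>F\<in>S. VR n 3 (subcube n F))
     \<and> (m \<noteq> n \<longrightarrow> (\<exists>G. cube_spec n (m + 1) G \<and> X \<subseteq> VR n 3 (subcube n G)
           \<and> (X \<noteq> cube_boundary n G \<longrightarrow>
               (\<exists>l e. l < n \<and> l \<notin> fst ` G
                  \<and> VR n 3 (subcube n (insert (l, e) G)) \<subseteq> X
                  \<and> \<not> VR n 3 (subcube n (insert (l, \<not> e) G)) \<subseteq> X))))}"

text \<open>An integer j-chain is a function on simplices supported on the j-simplices
  (vertex sets of cardinality j+1); the empty set plays the role of the unique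
  (-1)-simplex, so the boundary of a 0-chain evaluated at the empty set is the
  augmentation. Vertices are ordered by the order on nat, and the face obtained
  by deleting the vertex v gets sign (-1)^(number of vertices below v).\<close>

definition chains :: "nat set set \<Rightarrow> nat \<Rightarrow> (nat set \<Rightarrow> int) set" where
  "chains K j = {c. \<forall>\<sigma>. c \<sigma> \<noteq> 0 \<longrightarrow> \<sigma> \<in> K \<and> card \<sigma> = Suc j}"

definition bd :: "nat set set \<Rightarrow> (nat set \<Rightarrow> int) \<Rightarrow> nat set \<Rightarrow> int" where
  "bd K c \<tau> = (\<Sum>\<sigma> \<in> {\<sigma> \<in> K. \<tau> \<subseteq> \<sigma> \<and> card \<sigma> = Suc (card \<tau>)}.
      (-1) ^ card {x \<in> \<sigma>. x < the_elem (\<sigma> - \<tau>)} * c \<sigma>)"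

definition reduced_cycles :: "nat set set \<Rightarrow> nat \<Rightarrow> (nat set \<Rightarrow> int) set" where
  "reduced_cycles K j = {c \<in> chains K j. bd K c = (\<lambda>_. 0)}"

definition reduced_boundaries :: "nat set set \<Rightarrow> nat \<Rightarrow> (nat set \<Rightarrow> int) set" where
  "reduced_boundaries K j = bd K ` chains K (Suc j)"

definition reduced_homology_vanishes :: "nat set set \<Rightarrow> nat \<Rightarrow> bool" where
  "reduced_homology_vanishes K j \<longleftrightarrow> reduced_cycles K j = reduced_boundaries K j"

end

theory Submission
  imports Defs
begin

text \<open>Every 3-dimensional subcube of the 4-cube has Hamming diameter 3, so each \<open>VR(H\<^sub>j; 3)\<close>
  is the full simplex on the vertices of a facet, and \<open>X\<close> is a union of such simplices.
  If \<open>X\<close> contains a facet but not the opposite one, it is acyclic: gluing on the facets one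
  at a time, each new facet meets the previous union in a union of the same kind inside a
  smaller cube, so Mayer--Vietoris and induction apply, simplices being acyclic as cones.
  Otherwise \<open>X\<close> is the whole boundary of the 4-cube. Removing the facet \<open>x\<^sub>l = 0\<close> leaves
  an acyclic union of the first kind, meeting that facet in its own boundary; by
  Mayer--Vietoris and induction on the dimension, the boundary of a \<open>k\<close>-cube has vanishing
  reduced homology below degree \<open>k - 1\<close>.\<close>

definition simplicial_complex :: "nat set set \<Rightarrow> bool" where
  "simplicial_complex K \<longleftrightarrow> finite K \<and> (\<forall>\<sigma>\<in>K. \<sigma> \<noteq> {} \<and> finite \<sigma>)
     \<and> (\<forall>\<sigma>\<in>K. \<forall>\<tau>. \<tau> \<subseteq> \<sigma> \<and> \<tau> \<noteq> {} \<longrightarrow> \<tau> \<in> K)"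

lemma simplicial_complexI:
  assumes "finite K" "\<And>\<sigma>. \<sigma> \<in> K \<Longrightarrow> \<sigma> \<noteq> {} \<and> finite \<sigma>"
    and "\<And>\<sigma> \<tau>. \<sigma> \<in> K \<Longrightarrow> \<tau> \<subseteq> \<sigma> \<Longrightarrow> \<tau> \<noteq> {} \<Longrightarrow> \<tau> \<in> K"
  shows "simplicial_complex K"
  unfolding simplicial_complex_def using assms by blast

lemma
  assumes "simplicial_complex K"
  shows simplicial_complex_finite: "finite K"
    and simplex_nonempty: "\<sigma> \<in> K \<Longrightarrow> \<sigma> \<noteq> {}"
    and simplex_finite: "\<sigma> \<in> K \<Longrightarrow> finite \<sigma>"
    and face_in_complex: "\<sigma> \<in> K \<Longrightarrow> \<tau> \<subseteq> \<sigma> \<Longrightarrow> \<tau> \<noteq> {} \<Longrightarrow> \<tau> \<in> K"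
  using assms unfolding simplicial_complex_def by blast+

lemma simplicial_complex_Un:
  assumes "simplicial_complex K1" "simplicial_complex K2"
  shows "simplicial_complex (K1 \<union> K2)"
  using assms by (intro simplicial_complexI)
    (auto dest: simplicial_complex_finite simplex_nonempty simplex_finite face_in_complex)

lemma chainsI: "(\<And>\<sigma>. c \<sigma> \<noteq> 0 \<Longrightarrow> \<sigma> \<in> K \<and> card \<sigma> = Suc j) \<Longrightarrow> c \<in> chains K j"
  unfolding chains_def by blast

lemma chainsD: "c \<in> chains K j \<Longrightarrow> c \<sigma> \<noteq> 0 \<Longrightarrow> \<sigma> \<in> K \<and> card \<sigma> = Suc j"
  unfolding chains_def by blast

lemma chains_mono: "K \<subseteq> L \<Longrightarrow> chains K j \<subseteq> chains L j"
  unfolding chains_def by blast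

lemma chains_Int: "chains (K \<inter> L) j = chains K j \<inter> chains L j"
  unfolding chains_def by blast

lemma chains_add: "c \<in> chains K j \<Longrightarrow> d \<in> chains K j \<Longrightarrow> (\<lambda>\<sigma>. c \<sigma> + d \<sigma>) \<in> chains K j"
  unfolding chains_def by (smt (verit) mem_Collect_eq)

lemma chains_diff: "c \<in> chains K j \<Longrightarrow> d \<in> chains K j \<Longrightarrow> (\<lambda>\<sigma>. c \<sigma> - d \<sigma>) \<in> chains K j"
  unfolding chains_def by (smt (verit) mem_Collect_eq)

lemma chains_uminus: "c \<in> chains K j \<Longrightarrow> (\<lambda>\<sigma>. - c \<sigma>) \<in> chains K j"
  unfolding chains_def by simp

definition cofaces :: "nat set set \<Rightarrow> nat set \<Rightarrow> nat set set" where
  "cofaces K \<tau> = {\<sigma> \<in> K. \<tau> \<subseteq> \<sigma> \<and> card \<sigma> = Suc (card \<tau>)}"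

definition incidence :: "nat set \<Rightarrow> nat set \<Rightarrow> int" where
  "incidence \<sigma> \<tau> = (-1) ^ card {x \<in> \<sigma>. x < the_elem (\<sigma> - \<tau>)}"

lemma bd_eq_sum_cofaces: "bd K c \<tau> = (\<Sum>\<sigma>\<in>cofaces K \<tau>. incidence \<sigma> \<tau> * c \<sigma>)"
  unfolding bd_def cofaces_def incidence_def by simp

lemma finite_cofaces: "finite K \<Longrightarrow> finite (cofaces K \<tau>)"
  unfolding cofaces_def by simp

lemma cofaces_infinite:
  assumes "simplicial_complex K" "infinite \<tau>"
  shows "cofaces K \<tau> = {}"
proof -
  have "infinite \<sigma>" if "\<tau> \<subseteq> \<sigma>" for \<sigma>
    using assms(2) that finite_subset by blast
  then show ?thesis
    unfolding cofaces_def using simplex_finite[OF assms(1)] by blast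
qed

lemma bd_add: "bd K (\<lambda>\<sigma>. c \<sigma> + d \<sigma>) = (\<lambda>\<tau>. bd K c \<tau> + bd K d \<tau>)"
  by (rule ext) (simp add: bd_eq_sum_cofaces sum.distrib algebra_simps)

lemma bd_diff: "bd K (\<lambda>\<sigma>. c \<sigma> - d \<sigma>) = (\<lambda>\<tau>. bd K c \<tau> - bd K d \<tau>)"
  by (rule ext) (simp add: bd_eq_sum_cofaces sum_subtractf algebra_simps)

lemma bd_uminus: "bd K (\<lambda>\<sigma>. - c \<sigma>) = (\<lambda>\<tau>. - bd K c \<tau>)"
  by (rule ext) (simp add: bd_eq_sum_cofaces sum_negf)

lemma bd_subcomplex:
  assumes "finite K" "L \<subseteq> K" "c \<in> chains L j"
  shows "bd K c = bd L c"
proof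
  fix \<tau>
  have "cofaces L \<tau> \<subseteq> cofaces K \<tau>"
    using assms(2) by (auto simp: cofaces_def)
  moreover have "c \<sigma> = 0" if "\<sigma> \<in> cofaces K \<tau> - cofaces L \<tau>" for \<sigma>
    using that chainsD[OF assms(3), of \<sigma>] by (auto simp: cofaces_def)
  ultimately have "(\<Sum>\<sigma>\<in>cofaces K \<tau>. incidence \<sigma> \<tau> * c \<sigma>) = (\<Sum>\<sigma>\<in>cofaces L \<tau>. incidence \<sigma> \<tau> * c \<sigma>)"
    using finite_cofaces[OF assms(1)] by (intro sum.mono_neutral_right) auto
  then show "bd K c \<tau> = bd L c \<tau>" by (simp add: bd_eq_sum_cofaces)
qed

lemma bd_nonzeroD:
  assumes "c \<in> chains L j" "bd K c \<tau> \<noteq> 0"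
  shows "card \<tau> = j" "\<exists>\<sigma>\<in>K. \<tau> \<subseteq> \<sigma> \<and> c \<sigma> \<noteq> 0"
proof -
  from assms(2) obtain \<sigma> where "\<sigma> \<in> cofaces K \<tau>" "incidence \<sigma> \<tau> * c \<sigma> \<noteq> 0"
    unfolding bd_eq_sum_cofaces by (rule sum.not_neutral_contains_not_neutral)
  with chainsD[OF assms(1), of \<sigma>] show "card \<tau> = j" "\<exists>\<sigma>\<in>K. \<tau> \<subseteq> \<sigma> \<and> c \<sigma> \<noteq> 0"
    unfolding cofaces_def by auto
qed

lemma bd_in_chains:
  assumes "simplicial_complex K" "c \<in> chains K (Suc j)"
  shows "bd K c \<in> chains K j"
proof (rule chainsI)
  fix \<tau> assume "bd K c \<tau> \<noteq> 0"
  with bd_nonzeroD[OF assms(2)] obtain \<sigma> where "card \<tau> = Suc j" "\<sigma> \<in> K" "\<tau> \<subseteq> \<sigma>"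
    by blast
  moreover from \<open>card \<tau> = Suc j\<close> have "\<tau> \<noteq> {}" by auto
  ultimately show "\<tau> \<in> K \<and> card \<tau> = Suc j"
    using face_in_complex[OF assms(1)] by blast
qed

section \<open>The boundary of a boundary vanishes\<close>

lemma card_filter_less_insert:
  assumes "finite A" "x \<notin> A"
  shows "card {z \<in> insert x A. z < (y::nat)} = card {z \<in> A. z < y} + (if x < y then 1 else 0)"
proof -
  have "{z \<in> insert x A. z < y} = (if x < y then insert x {z \<in> A. z < y} else {z \<in> A. z < y})"
    by auto
  then show ?thesis using assms by auto
qed

lemma incidence_insert: "x \<notin> \<rho> \<Longrightarrow> incidence (insert x \<rho>) \<rho> = (-1) ^ card {z \<in> \<rho>. z < x}"
proof -
  assume "x \<notin> \<rho>"
  then have "insert x \<rho> - \<rho> = {x}" "{z \<in> insert x \<rho>. z < x} = {z \<in> \<rho>. z < x}" by auto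
  then show ?thesis unfolding incidence_def by simp
qed

lemma incidence_square_cancel:
  assumes "finite \<rho>" "x \<notin> \<rho>" "y \<notin> \<rho>" "x < y"
  shows "incidence (insert x \<rho>) \<rho> * incidence (insert x (insert y \<rho>)) (insert x \<rho>)
       + incidence (insert y \<rho>) \<rho> * incidence (insert x (insert y \<rho>)) (insert y \<rho>) = 0"
proof -
  have "incidence (insert y (insert x \<rho>)) (insert x \<rho>) = (-1) ^ card {z \<in> insert x \<rho>. z < y}"
    using assms by (intro incidence_insert) auto
  also have "\<dots> = (-1) ^ Suc (card {z \<in> \<rho>. z < y})"
    using card_filter_less_insert[OF assms(1,2), of y] assms(4) by simp
  finally have "incidence (insert y (insert x \<rho>)) (insert x \<rho>) = (-1) ^ Suc (card {z \<in> \<rho>. z < y})" .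
  moreover have "incidence (insert x (insert y \<rho>)) (insert y \<rho>) = (-1) ^ card {z \<in> insert y \<rho>. z < x}"
    using assms by (intro incidence_insert) auto
  moreover have "card {z \<in> insert y \<rho>. z < x} = card {z \<in> \<rho>. z < x}"
    using card_filter_less_insert[OF assms(1,3), of x] assms(4) by simp
  moreover have "insert x (insert y \<rho>) = insert y (insert x \<rho>)" by blast
  ultimately show ?thesis
    using assms by (simp add: incidence_insert)
qed

lemma intermediate_faces:
  assumes "simplicial_complex K" "\<sigma> \<in> K" "\<tau>0 \<in> cofaces K \<rho>" "\<sigma> \<in> cofaces K \<tau>0"
  obtains x y where "x < y" "x \<notin> \<rho>" "y \<notin> \<rho>" "finite \<rho>" "\<sigma> = insert x (insert y \<rho>)"
    "{\<tau> \<in> cofaces K \<rho>. \<sigma> \<in> cofaces K \<tau>} = {insert x \<rho>, insert y \<rho>}"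
proof -
  have fin: "finite \<sigma>" using simplex_finite[OF assms(1,2)] .
  have sub: "\<rho> \<subseteq> \<tau>0" "\<tau>0 \<subseteq> \<sigma>" "card \<tau>0 = Suc (card \<rho>)" "card \<sigma> = Suc (card \<tau>0)"
    using assms(3,4) unfolding cofaces_def by simp_all
  have "\<rho> \<subseteq> \<sigma>" using sub(1,2) by (rule order_trans)
  then have "finite \<rho>" using fin by (rule finite_subset)
  with \<open>\<rho> \<subseteq> \<sigma>\<close> have "card (\<sigma> - \<rho>) = 2" using sub(3,4) by (simp add: card_Diff_subset)
  then obtain x0 y0 where "\<sigma> - \<rho> = {x0, y0}" "x0 \<noteq> y0" by (meson card_2_iff)
  moreover have "{x0, y0} = {y0, x0}" by blast
  ultimately obtain x y where xy: "\<sigma> - \<rho> = {x, y}" "x < y"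
    by (metis linorder_neqE_nat)
  have \<sigma>: "\<sigma> = insert x (insert y \<rho>)" using xy \<open>\<rho> \<subseteq> \<sigma>\<close> by auto
  have "{\<tau> \<in> cofaces K \<rho>. \<sigma> \<in> cofaces K \<tau>} = {insert x \<rho>, insert y \<rho>}"
  proof (intro equalityI subsetI)
    fix \<tau> assume "\<tau> \<in> {\<tau> \<in> cofaces K \<rho>. \<sigma> \<in> cofaces K \<tau>}"
    then have \<tau>: "\<rho> \<subseteq> \<tau>" "\<tau> \<subseteq> \<sigma>" "card \<tau> = Suc (card \<rho>)" unfolding cofaces_def by auto
    moreover have "finite \<tau>" using \<tau>(2) fin by (rule finite_subset)
    ultimately have "card (\<tau> - \<rho>) = 1" using \<open>finite \<rho>\<close> by (simp add: card_Diff_subset)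
    then obtain z where "\<tau> - \<rho> = {z}" by (rule card_1_singletonE)
    then have "z \<in> {x, y}" "\<tau> = insert z \<rho>" using \<tau>(1,2) xy(1) by blast+
    then show "\<tau> \<in> {insert x \<rho>, insert y \<rho>}" by blast
  next
    fix \<tau> assume "\<tau> \<in> {insert x \<rho>, insert y \<rho>}"
    then obtain z where z: "z \<in> {x, y}" "\<tau> = insert z \<rho>" by blast
    then have "z \<notin> \<rho>" "\<tau> \<subseteq> \<sigma>" using xy(1) \<sigma> by blast+
    then have "\<tau> \<in> K" using face_in_complex[OF assms(1,2)] z(2) by blast
    have card_\<tau>: "card \<tau> = Suc (card \<rho>)" using z(2) \<open>z \<notin> \<rho>\<close> \<open>finite \<rho>\<close> by simp
    then have "card \<sigma> = Suc (card \<tau>)" using sub(3,4) by simp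
    with \<open>\<tau> \<in> K\<close> \<open>\<tau> \<subseteq> \<sigma>\<close> card_\<tau> z(2) assms(2)
    show "\<tau> \<in> {\<tau> \<in> cofaces K \<rho>. \<sigma> \<in> cofaces K \<tau>}"
      unfolding cofaces_def by auto
  qed
  with xy \<sigma> \<open>finite \<rho>\<close> show ?thesis by (intro that) auto
qed

lemma sum_incidence_intermediate_faces:
  assumes "simplicial_complex K" "\<sigma> \<in> K"
  shows "(\<Sum>\<tau>\<in>{\<tau> \<in> cofaces K \<rho>. \<sigma> \<in> cofaces K \<tau>}. incidence \<tau> \<rho> * incidence \<sigma> \<tau>) = 0"
proof (cases "{\<tau> \<in> cofaces K \<rho>. \<sigma> \<in> cofaces K \<tau>} = {}")
  case False
  then obtain \<tau>0 where "\<tau>0 \<in> cofaces K \<rho>" "\<sigma> \<in> cofaces K \<tau>0" by blast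
  with assms obtain x y where xy: "x < y" "x \<notin> \<rho>" "y \<notin> \<rho>" "finite \<rho>"
    and "\<sigma> = insert x (insert y \<rho>)"
    and "{\<tau> \<in> cofaces K \<rho>. \<sigma> \<in> cofaces K \<tau>} = {insert x \<rho>, insert y \<rho>}"
    by (rule intermediate_faces)
  moreover have "insert x \<rho> \<noteq> insert y \<rho>" using xy by auto
  ultimately show ?thesis using incidence_square_cancel[OF xy(4,2,3,1)] by simp
qed (simp only: sum.empty)

lemma bd_bd:
  assumes "simplicial_complex K"
  shows "bd K (bd K c) = (\<lambda>_. 0)"
proof
  fix \<rho>
  have fin: "finite K" using simplicial_complex_finite[OF assms] .
  have "bd K (bd K c) \<rho>
      = (\<Sum>\<tau>\<in>cofaces K \<rho>. \<Sum>\<sigma>\<in>{\<sigma> \<in> K. \<sigma> \<in> cofaces K \<tau>}. incidence \<tau> \<rho> * (incidence \<sigma> \<tau> * c \<sigma>))"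
    unfolding bd_eq_sum_cofaces sum_distrib_left by (simp add: cofaces_def)
  also have "\<dots> = (\<Sum>\<sigma>\<in>K. \<Sum>\<tau>\<in>{\<tau> \<in> cofaces K \<rho>. \<sigma> \<in> cofaces K \<tau>}. incidence \<tau> \<rho> * (incidence \<sigma> \<tau> * c \<sigma>))"
    using fin finite_cofaces by (intro sum.swap_restrict) auto
  also have "\<dots> = (\<Sum>\<sigma>\<in>K. (\<Sum>\<tau>\<in>{\<tau> \<in> cofaces K \<rho>. \<sigma> \<in> cofaces K \<tau>}. incidence \<tau> \<rho> * incidence \<sigma> \<tau>) * c \<sigma>)"
    by (simp add: sum_distrib_right mult.assoc)
  also have "\<dots> = 0"
    using sum_incidence_intermediate_faces[OF assms] by simp
  finally show "bd K (bd K c) \<rho> = 0" .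
qed

lemma boundaries_subset_cycles:
  assumes "simplicial_complex K"
  shows "reduced_boundaries K j \<subseteq> reduced_cycles K j"
  unfolding reduced_boundaries_def reduced_cycles_def
  using bd_in_chains[OF assms] bd_bd[OF assms] by blast

lemma reduced_homology_vanishesI:
  "simplicial_complex K \<Longrightarrow> reduced_cycles K j \<subseteq> reduced_boundaries K j
   \<Longrightarrow> reduced_homology_vanishes K j"
  unfolding reduced_homology_vanishes_def using boundaries_subset_cycles by blast

section \<open>Cones are acyclic\<close>

lemma cofaceE:
  assumes "simplicial_complex K" "\<sigma> \<in> cofaces K \<tau>"
  obtains e where "e \<notin> \<tau>" "\<sigma> = insert e \<tau>"
proof -
  from assms(2) have \<sigma>: "\<sigma> \<in> K" "\<tau> \<subseteq> \<sigma>" "card \<sigma> = Suc (card \<tau>)"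
    unfolding cofaces_def by auto
  have "finite \<sigma>" using simplex_finite[OF assms(1) \<sigma>(1)] .
  then have "finite \<tau>" by (rule finite_subset[OF \<sigma>(2)])
  then have "card (\<sigma> - \<tau>) = 1" using \<sigma>(2,3) by (simp add: card_Diff_subset)
  then obtain e where "\<sigma> - \<tau> = {e}" by (rule card_1_singletonE)
  with \<sigma>(2) show ?thesis by (intro that) auto
qed

lemma incidence_insert_least:
  assumes "x \<notin> \<rho>" "\<And>z. z \<in> \<rho> \<Longrightarrow> x \<le> z"
  shows "incidence (insert x \<rho>) \<rho> = 1"
proof -
  have "{z \<in> \<rho>. z < x} = {}" using assms(2) by force
  then show ?thesis unfolding incidence_insert[OF assms(1)] by (simp only: card.empty power_0)
qed

lemma incidence_insert_below:
  assumes "finite \<sigma>" "w \<notin> \<sigma>" "\<sigma> - \<tau> = {e}" "w < e"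
  shows "incidence (insert w \<sigma>) (insert w \<tau>) = - incidence \<sigma> \<tau>"
proof -
  have "insert w \<sigma> - insert w \<tau> = {e}" using assms(2,3) by blast
  moreover have "card {z \<in> insert w \<sigma>. z < e} = Suc (card {z \<in> \<sigma>. z < e})"
    using card_filter_less_insert[OF assms(1,2), of e] assms(4) by simp
  ultimately show ?thesis using assms(3) unfolding incidence_def by simp
qed

definition cone_chain :: "nat \<Rightarrow> (nat set \<Rightarrow> int) \<Rightarrow> nat set \<Rightarrow> int" where
  "cone_chain w c \<rho> = (if w \<in> \<rho> then c (\<rho> - {w}) else 0)"

text \<open>With the apex below every vertex, coning shifts each incidence sign by exactly one
  (lemma \<open>incidence_insert_below\<close>), which makes the cone operator a contracting homotopy.\<close>

context
  fixes K :: "nat set set" and w :: nat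
  assumes complex: "simplicial_complex K"
    and apex: "\<And>\<sigma>. \<sigma> \<in> K \<Longrightarrow> insert w \<sigma> \<in> K"
    and apex_least: "\<And>\<sigma> z. \<sigma> \<in> K \<Longrightarrow> z \<in> \<sigma> \<Longrightarrow> w \<le> z"
begin

lemma cone_chain_in_chains:
  assumes "c \<in> chains K j"
  shows "cone_chain w c \<in> chains K (Suc j)"
proof (rule chainsI)
  fix \<rho> assume "cone_chain w c \<rho> \<noteq> 0"
  then have "w \<in> \<rho>" and "c (\<rho> - {w}) \<noteq> 0" unfolding cone_chain_def by (auto split: if_splits)
  with chainsD[OF assms] have face: "\<rho> - {w} \<in> K" "card (\<rho> - {w}) = Suc j" by blast+
  have "finite (\<rho> - {w})" using face(2) by (intro card_ge_0_finite) simp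
  then have "card \<rho> = Suc (Suc j)"
    using card_Suc_Diff1[of \<rho> w] \<open>w \<in> \<rho>\<close> face(2) by simp
  moreover have "\<rho> \<in> K" using apex[OF face(1)] \<open>w \<in> \<rho>\<close> by (simp add: insert_absorb)
  ultimately show "\<rho> \<in> K \<and> card \<rho> = Suc (Suc j)" by blast
qed

lemma bd_cone_chain_apex_free:
  assumes "c \<in> chains K j" "w \<notin> \<tau>"
  shows "bd K (cone_chain w c) \<tau> = c \<tau>"
proof -
  have summand: "incidence \<sigma> \<tau> * cone_chain w c \<sigma> = (if \<sigma> = insert w \<tau> then c \<tau> else 0)"
    if \<sigma>: "\<sigma> \<in> cofaces K \<tau>" for \<sigma>
  proof (cases "w \<in> \<sigma>")
    case True
    obtain e where "e \<notin> \<tau>" "\<sigma> = insert e \<tau>" by (rule cofaceE[OF complex \<sigma>])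
    with True assms(2) have "\<sigma> = insert w \<tau>" by simp
    moreover have "\<sigma> \<in> K" using \<sigma> by (simp add: cofaces_def)
    then have "incidence (insert w \<tau>) \<tau> = 1"
      using assms(2) apex_least \<open>\<sigma> = insert w \<tau>\<close> by (intro incidence_insert_least) auto
    ultimately show ?thesis using assms(2) by (simp add: cone_chain_def)
  next
    case False
    then show ?thesis by (auto simp: cone_chain_def)
  qed
  have "bd K (cone_chain w c) \<tau> = (\<Sum>\<sigma>\<in>cofaces K \<tau>. if \<sigma> = insert w \<tau> then c \<tau> else 0)"
    unfolding bd_eq_sum_cofaces using summand by (rule sum.cong[OF refl])
  also have "\<dots> = (if insert w \<tau> \<in> cofaces K \<tau> then c \<tau> else 0)"
    using finite_cofaces[OF simplicial_complex_finite[OF complex]] by (rule sum.delta)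
  also have "\<dots> = c \<tau>"
  proof (cases "c \<tau> = 0")
    case False
    with chainsD[OF assms(1)] have "\<tau> \<in> K" "card \<tau> = Suc j" by blast+
    moreover have "finite \<tau>" using simplex_finite[OF complex \<open>\<tau> \<in> K\<close>] .
    ultimately have "insert w \<tau> \<in> cofaces K \<tau>"
      using apex[of \<tau>] assms(2) by (auto simp: cofaces_def)
    then show ?thesis by simp
  next
    case True
    then show ?thesis by simp
  qed
  finally show ?thesis .
qed


lemma cofaces_apex_bij:
  assumes "w \<notin> \<tau>"
  shows "bij_betw (insert w) {\<sigma> \<in> cofaces K \<tau>. w \<notin> \<sigma>} (cofaces K (insert w \<tau>))"
proof (rule bij_betw_byWitness[where f' = "\<lambda>\<sigma>. \<sigma> - {w}"])
  show "insert w ` {\<sigma> \<in> cofaces K \<tau>. w \<notin> \<sigma>} \<subseteq> cofaces K (insert w \<tau>)"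
  proof clarify
    fix \<sigma> assume "\<sigma> \<in> cofaces K \<tau>" "w \<notin> \<sigma>"
    moreover obtain e where "e \<notin> \<tau>" "\<sigma> = insert e \<tau>" using cofaceE[OF complex \<open>\<sigma> \<in> cofaces K \<tau>\<close>] .
    moreover have "\<sigma> \<in> K" "finite \<sigma>"
      using \<open>\<sigma> \<in> cofaces K \<tau>\<close> simplex_finite[OF complex] by (auto simp: cofaces_def)
    ultimately show "insert w \<sigma> \<in> cofaces K (insert w \<tau>)"
      using apex[of \<sigma>] by (auto simp: cofaces_def insert_commute)
  qed
  show "(\<lambda>\<sigma>. \<sigma> - {w}) ` cofaces K (insert w \<tau>) \<subseteq> {\<sigma> \<in> cofaces K \<tau>. w \<notin> \<sigma>}"
  proof clarify
    fix \<sigma> assume "\<sigma> \<in> cofaces K (insert w \<tau>)"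
    then obtain e where e: "e \<notin> insert w \<tau>" "\<sigma> = insert e (insert w \<tau>)" "\<sigma> \<in> K"
      using cofaceE[OF complex] unfolding cofaces_def by blast
    then have "finite \<tau>" using simplex_finite[OF complex] by (metis finite_insert)
    moreover have "\<sigma> - {w} = insert e \<tau>" using e(1,2) assms by auto
    moreover have "insert e \<tau> \<in> K" using face_in_complex[OF complex e(3)] e(2) by blast
    ultimately show "\<sigma> - {w} \<in> cofaces K \<tau> \<and> w \<notin> \<sigma> - {w}"
      using e(1) assms by (auto simp: cofaces_def)
  qed
qed (use assms in \<open>auto simp: cofaces_def\<close>)

lemma cofaces_split_apex:
  assumes "w \<notin> \<tau>" "finite \<tau>"
  shows "cofaces K \<tau> = {\<sigma> \<in> cofaces K \<tau>. w \<notin> \<sigma>} \<union> ({insert w \<tau>} \<inter> K)"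
proof (intro equalityI subsetI)
  fix \<sigma> assume \<sigma>: "\<sigma> \<in> cofaces K \<tau>"
  show "\<sigma> \<in> {\<sigma> \<in> cofaces K \<tau>. w \<notin> \<sigma>} \<union> ({insert w \<tau>} \<inter> K)"
  proof (cases "w \<in> \<sigma>")
    case True
    obtain e where "e \<notin> \<tau>" "\<sigma> = insert e \<tau>" by (rule cofaceE[OF complex \<sigma>])
    with True assms(1) have "\<sigma> = insert w \<tau>" by simp
    moreover have "\<sigma> \<in> K" using \<sigma> by (simp add: cofaces_def)
    ultimately show ?thesis by simp
  qed (use \<sigma> in simp)
next
  fix \<sigma> assume "\<sigma> \<in> {\<sigma> \<in> cofaces K \<tau>. w \<notin> \<sigma>} \<union> ({insert w \<tau>} \<inter> K)"
  then show "\<sigma> \<in> cofaces K \<tau>" using assms by (auto simp: cofaces_def)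
qed

lemma bd_split_apex:
  assumes "c \<in> chains K j" "w \<notin> \<tau>" "finite \<tau>"
  shows "bd K c \<tau> = (\<Sum>\<sigma>\<in>{\<sigma> \<in> cofaces K \<tau>. w \<notin> \<sigma>}. incidence \<sigma> \<tau> * c \<sigma>) + c (insert w \<tau>)"
proof -
  have "finite (cofaces K \<tau>)" using finite_cofaces[OF simplicial_complex_finite[OF complex]] .
  then have "bd K c \<tau> = (\<Sum>\<sigma>\<in>{\<sigma> \<in> cofaces K \<tau>. w \<notin> \<sigma>}. incidence \<sigma> \<tau> * c \<sigma>)
      + (\<Sum>\<sigma>\<in>{insert w \<tau>} \<inter> K. incidence \<sigma> \<tau> * c \<sigma>)"
    unfolding bd_eq_sum_cofaces by (subst cofaces_split_apex[OF assms(2,3)], intro sum.union_disjoint) auto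
  also have "(\<Sum>\<sigma>\<in>{insert w \<tau>} \<inter> K. incidence \<sigma> \<tau> * c \<sigma>) = c (insert w \<tau>)"
  proof (cases "insert w \<tau> \<in> K")
    case True
    then have "incidence (insert w \<tau>) \<tau> = 1"
      using assms(2) apex_least by (intro incidence_insert_least) blast+
    with True show ?thesis by simp
  next
    case False
    then show ?thesis using chainsD[OF assms(1), of "insert w \<tau>"] by auto
  qed
  finally show ?thesis .
qed

lemma bd_cone_chain_apex:
  assumes "c \<in> chains K j" "w \<notin> \<tau>"
  shows "bd K (cone_chain w c) (insert w \<tau>) = c (insert w \<tau>) - bd K c \<tau>"
proof (cases "finite \<tau>")
  case False
  then have "c (insert w \<tau>) = 0" using chainsD[OF assms(1)] by fastforce
  with False show ?thesis by (simp add: bd_eq_sum_cofaces cofaces_infinite[OF complex])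
next
  case True
  define C0 where "C0 = {\<sigma> \<in> cofaces K \<tau>. w \<notin> \<sigma>}"
  have "bd K (cone_chain w c) (insert w \<tau>) = (\<Sum>\<sigma>\<in>C0. incidence (insert w \<sigma>) (insert w \<tau>) * c \<sigma>)"
    unfolding bd_eq_sum_cofaces C0_def sum.reindex_bij_betw[OF cofaces_apex_bij[OF assms(2)], symmetric]
    by (rule sum.cong) (auto simp: cone_chain_def)
  also have "\<dots> = - (\<Sum>\<sigma>\<in>C0. incidence \<sigma> \<tau> * c \<sigma>)"
  proof -
    have "incidence (insert w \<sigma>) (insert w \<tau>) = - incidence \<sigma> \<tau>" if "\<sigma> \<in> C0" for \<sigma>
    proof -
      from that have \<sigma>: "\<sigma> \<in> cofaces K \<tau>" "w \<notin> \<sigma>" unfolding C0_def by auto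
      obtain e where e: "e \<notin> \<tau>" "\<sigma> = insert e \<tau>" by (rule cofaceE[OF complex \<sigma>(1)])
      have "\<sigma> \<in> K" using \<sigma>(1) by (simp add: cofaces_def)
      then have "w < e" using apex_least[of \<sigma> e] e(2) \<sigma>(2) by fastforce
      with e True \<sigma>(2) show ?thesis by (intro incidence_insert_below) auto
    qed
    then have "(\<Sum>\<sigma>\<in>C0. incidence (insert w \<sigma>) (insert w \<tau>) * c \<sigma>)
             = (\<Sum>\<sigma>\<in>C0. - (incidence \<sigma> \<tau> * c \<sigma>))"
      by (intro sum.cong) simp_all
    then show ?thesis by (simp only: sum_negf)
  qed
  also have "bd K c \<tau> = (\<Sum>\<sigma>\<in>C0. incidence \<sigma> \<tau> * c \<sigma>) + c (insert w \<tau>)"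
    unfolding C0_def using assms True by (rule bd_split_apex)
  ultimately show ?thesis by simp
qed

lemma cone_reduced_homology_vanishes: "reduced_homology_vanishes K j"
proof (rule reduced_homology_vanishesI[OF complex], rule subsetI)
  fix c assume "c \<in> reduced_cycles K j"
  then have c: "c \<in> chains K j" "bd K c = (\<lambda>_. 0)" unfolding reduced_cycles_def by auto
  have "bd K (cone_chain w c) = c"
  proof
    fix \<tau>
    show "bd K (cone_chain w c) \<tau> = c \<tau>"
    proof (cases "w \<in> \<tau>")
      case True
      then have "\<tau> = insert w (\<tau> - {w})" by blast
      then show ?thesis using bd_cone_chain_apex[OF c(1), of "\<tau> - {w}"] c(2) by simp
    qed (rule bd_cone_chain_apex_free[OF c(1)])
  qed
  then show "c \<in> reduced_boundaries K j"
    unfolding reduced_boundaries_def using cone_chain_in_chains[OF c(1)] by (metis image_eqI)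
qed

end

section \<open>Mayer--Vietoris\<close>

lemma bd_chain_degree_0:
  assumes "simplicial_complex K" "c \<in> chains L 0"
  shows "bd K c = (\<lambda>\<tau>. if \<tau> = {} then bd K c {} else 0)"
proof
  fix \<tau>
  show "bd K c \<tau> = (if \<tau> = {} then bd K c {} else 0)"
  proof (cases "bd K c \<tau> = 0")
    case False
    from bd_nonzeroD[OF assms(2) False] obtain \<sigma> where "card \<tau> = 0" "\<sigma> \<in> K" "\<tau> \<subseteq> \<sigma>" by blast
    moreover have "finite \<tau>" using simplex_finite[OF assms(1) \<open>\<sigma> \<in> K\<close>] \<open>\<tau> \<subseteq> \<sigma>\<close> by (rule rev_finite_subset)
    ultimately show ?thesis by simp
  qed auto
qed

lemma bd_vertex_chain:
  assumes "simplicial_complex L" "{v} \<in> L"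
  shows "bd L (\<lambda>\<sigma>. if \<sigma> = {v} then a else 0) = (\<lambda>\<tau>. if \<tau> = {} then a else 0)"
proof -
  have "(\<lambda>\<sigma>. if \<sigma> = {v} then a else 0) \<in> chains L 0"
    using assms(2) by (intro chainsI) (simp split: if_splits)
  moreover have "bd L (\<lambda>\<sigma>. if \<sigma> = {v} then a else 0) {} = a"
  proof -
    have "{v} \<in> cofaces L {}" using assms(2) by (simp add: cofaces_def)
    moreover have "incidence {v} {} = 1" by (rule incidence_insert_least) auto
    ultimately show ?thesis
      using finite_cofaces[OF simplicial_complex_finite[OF assms(1)]]
      by (simp add: bd_eq_sum_cofaces if_distrib[of "\<lambda>x. _ * x"] sum.delta cong: if_cong)
  qed
  ultimately show ?thesis using bd_chain_degree_0[OF assms(1)] by metis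
qed

lemma mayer_vietoris_lift_Suc:
  assumes K1: "simplicial_complex K1" and K2: "simplicial_complex K2"
    and z: "z1 \<in> chains K1 (Suc i)" "z2 \<in> chains K2 (Suc i)" "bd K1 z1 = bd K2 z2"
    and H: "reduced_homology_vanishes (K1 \<inter> K2) i"
  obtains b where "b \<in> chains (K1 \<inter> K2) (Suc i)" "bd K1 b = bd K1 z1" "bd K2 b = bd K1 z1"
proof -
  define y where "y = bd K1 z1"
  have "y \<in> chains K1 i" unfolding y_def using bd_in_chains[OF K1 z(1)] .
  moreover have "y \<in> chains K2 i" unfolding y_def z(3) using bd_in_chains[OF K2 z(2)] .
  ultimately have y: "y \<in> chains (K1 \<inter> K2) i" by (simp add: chains_Int)
  have fin: "finite K1" "finite K2" using K1 K2 by (simp_all add: simplicial_complex_finite)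
  have "bd (K1 \<inter> K2) y = bd K1 y" using bd_subcomplex[OF fin(1) _ y] by simp
  also have "\<dots> = (\<lambda>_. 0)" unfolding y_def by (rule bd_bd[OF K1])
  finally have "y \<in> reduced_boundaries (K1 \<inter> K2) i"
    using H y unfolding reduced_homology_vanishes_def reduced_cycles_def by blast
  then obtain b where b: "b \<in> chains (K1 \<inter> K2) (Suc i)" "y = bd (K1 \<inter> K2) b"
    unfolding reduced_boundaries_def by blast
  moreover have "bd K1 b = y" "bd K2 b = y"
    using bd_subcomplex[OF fin(1) _ b(1)] bd_subcomplex[OF fin(2) _ b(1)] b(2) by auto
  ultimately show ?thesis using that unfolding y_def by blast
qed

text \<open>In degree 0 a boundary lives on the empty simplex (the augmentation), so it is
  lifted by a multiple of any common vertex.\<close>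

lemma mayer_vietoris_lift_0:
  assumes K1: "simplicial_complex K1" and K2: "simplicial_complex K2"
    and z1: "z1 \<in> chains K1 0" and meet: "K1 \<inter> K2 \<noteq> {}"
  obtains b where "b \<in> chains (K1 \<inter> K2) 0" "bd K1 b = bd K1 z1" "bd K2 b = bd K1 z1"
proof -
  obtain \<sigma> v where \<sigma>: "\<sigma> \<in> K1" "\<sigma> \<in> K2" "v \<in> \<sigma>"
    using meet simplex_nonempty[OF K1] by blast
  then have v: "{v} \<in> K1" "{v} \<in> K2"
    using face_in_complex[OF K1 \<sigma>(1), of "{v}"] face_in_complex[OF K2 \<sigma>(2), of "{v}"] by auto
  define a where "a = bd K1 z1 {}"
  have "(\<lambda>\<sigma>. if \<sigma> = {v} then a else 0) \<in> chains (K1 \<inter> K2) 0"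
    using v by (intro chainsI) (simp split: if_splits)
  moreover have "bd K1 z1 = (\<lambda>\<tau>. if \<tau> = {} then a else 0)"
    unfolding a_def by (rule bd_chain_degree_0[OF K1 z1])
  ultimately show ?thesis using that bd_vertex_chain[OF K1 v(1)] bd_vertex_chain[OF K2 v(2)] by metis
qed

lemma chains_Un_split:
  assumes "z \<in> chains (K1 \<union> K2) j"
  obtains z1 z2 where "z1 \<in> chains K1 j" "z2 \<in> chains K2 j" "z = (\<lambda>\<sigma>. z1 \<sigma> + z2 \<sigma>)"
proof (rule that)
  show "(\<lambda>\<sigma>. if \<sigma> \<in> K1 then z \<sigma> else 0) \<in> chains K1 j"
  proof (rule chainsI)
    fix \<sigma> assume "(if \<sigma> \<in> K1 then z \<sigma> else 0) \<noteq> 0"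
    then have "\<sigma> \<in> K1" "z \<sigma> \<noteq> 0" by (simp_all split: if_splits)
    then show "\<sigma> \<in> K1 \<and> card \<sigma> = Suc j" using chainsD[OF assms, of \<sigma>] by blast
  qed
  show "(\<lambda>\<sigma>. if \<sigma> \<in> K1 then 0 else z \<sigma>) \<in> chains K2 j"
  proof (rule chainsI)
    fix \<sigma> assume "(if \<sigma> \<in> K1 then 0 else z \<sigma>) \<noteq> 0"
    then have "\<sigma> \<notin> K1" "z \<sigma> \<noteq> 0" by (simp_all split: if_splits)
    then show "\<sigma> \<in> K2 \<and> card \<sigma> = Suc j" using chainsD[OF assms, of \<sigma>] by blast
  qed
  show "z = (\<lambda>\<sigma>. (if \<sigma> \<in> K1 then z \<sigma> else 0) + (if \<sigma> \<in> K1 then 0 else z \<sigma>))"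
    by (rule ext) simp
qed

lemma bd_Un_add:
  assumes "finite K1" "finite K2" "c1 \<in> chains K1 j" "c2 \<in> chains K2 j"
  shows "bd (K1 \<union> K2) (\<lambda>\<sigma>. c1 \<sigma> + c2 \<sigma>) = (\<lambda>\<tau>. bd K1 c1 \<tau> + bd K2 c2 \<tau>)"
proof -
  have "finite (K1 \<union> K2)" using assms(1,2) by simp
  then have "bd (K1 \<union> K2) c1 = bd K1 c1" "bd (K1 \<union> K2) c2 = bd K2 c2"
    using bd_subcomplex[OF _ Un_upper1 assms(3)] bd_subcomplex[OF _ Un_upper2 assms(4)] by blast+
  then show ?thesis by (simp only: bd_add)
qed

lemma mayer_vietoris:
  assumes K1: "simplicial_complex K1" and K2: "simplicial_complex K2"
    and H1: "reduced_homology_vanishes K1 j" and H2: "reduced_homology_vanishes K2 j"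
    and bottom: "j = 0 \<Longrightarrow> K1 \<inter> K2 \<noteq> {}"
    and step: "\<And>i. j = Suc i \<Longrightarrow> reduced_homology_vanishes (K1 \<inter> K2) i"
  shows "reduced_homology_vanishes (K1 \<union> K2) j"
proof (rule reduced_homology_vanishesI[OF simplicial_complex_Un[OF K1 K2]], rule subsetI)
  fix z assume "z \<in> reduced_cycles (K1 \<union> K2) j"
  then have z: "z \<in> chains (K1 \<union> K2) j" "bd (K1 \<union> K2) z = (\<lambda>_. 0)"
    unfolding reduced_cycles_def by auto
  obtain z1 z2 where z1: "z1 \<in> chains K1 j" and z2: "z2 \<in> chains K2 j"
    and z_eq: "z = (\<lambda>\<sigma>. z1 \<sigma> + z2 \<sigma>)"
    using chains_Un_split[OF z(1)] by blast
  have fin: "finite K1" "finite K2" using K1 K2 by (simp_all add: simplicial_complex_finite)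
  have sum_zero: "(\<lambda>\<tau>. bd K1 z1 \<tau> + bd K2 z2 \<tau>) = (\<lambda>_. 0)"
    using z(2) unfolding z_eq bd_Un_add[OF fin z1 z2] .
  have "bd K1 z1 \<tau> = - bd K2 z2 \<tau>" for \<tau>
    using fun_cong[OF sum_zero, of \<tau>] by (simp add: eq_neg_iff_add_eq_0)
  then have z12: "bd K1 z1 = bd K2 (\<lambda>\<sigma>. - z2 \<sigma>)" unfolding bd_uminus by blast
  obtain b where b: "b \<in> chains (K1 \<inter> K2) j" "bd K1 b = bd K1 z1" "bd K2 b = bd K1 z1"
  proof (cases j)
    case 0
    with that show ?thesis using mayer_vietoris_lift_0[OF K1 K2 _ bottom] z1 by blast
  next
    case (Suc i)
    with that show ?thesis
      using mayer_vietoris_lift_Suc[OF K1 K2 _ _ z12 step] z1 chains_uminus[OF z2] by blast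
  qed
  have b1: "b \<in> chains K1 j" and b2: "b \<in> chains K2 j" using b(1) by (simp_all add: chains_Int)
  have "(\<lambda>\<sigma>. z1 \<sigma> - b \<sigma>) \<in> reduced_cycles K1 j"
    using chains_diff[OF z1 b1] b(2) by (simp add: reduced_cycles_def bd_diff)
  then obtain a1 where a1: "a1 \<in> chains K1 (Suc j)" "(\<lambda>\<sigma>. z1 \<sigma> - b \<sigma>) = bd K1 a1"
    using H1 unfolding reduced_homology_vanishes_def reduced_boundaries_def by auto
  have "(\<lambda>\<sigma>. z2 \<sigma> + b \<sigma>) \<in> reduced_cycles K2 j"
    using chains_add[OF z2 b2] b(3) z12 by (simp add: reduced_cycles_def bd_add bd_uminus)
  then obtain a2 where a2: "a2 \<in> chains K2 (Suc j)" "(\<lambda>\<sigma>. z2 \<sigma> + b \<sigma>) = bd K2 a2"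
    using H2 unfolding reduced_homology_vanishes_def reduced_boundaries_def by auto
  have "(\<lambda>\<sigma>. a1 \<sigma> + a2 \<sigma>) \<in> chains (K1 \<union> K2) (Suc j)"
    using a1(1) a2(1) chains_mono[of K1 "K1 \<union> K2"] chains_mono[of K2 "K1 \<union> K2"]
    by (intro chains_add) auto
  moreover have "bd (K1 \<union> K2) (\<lambda>\<sigma>. a1 \<sigma> + a2 \<sigma>) = z"
    unfolding bd_Un_add[OF fin a1(1) a2(1)] a1(2)[symmetric] a2(2)[symmetric] z_eq by simp
  ultimately show "z \<in> reduced_boundaries (K1 \<union> K2) j"
    unfolding reduced_boundaries_def by (metis image_eqI)
qed

definition acyclic_complex :: "nat set set \<Rightarrow> bool" where
  "acyclic_complex K \<longleftrightarrow> K \<noteq> {} \<and> (\<forall>j. reduced_homology_vanishes K j)"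

lemma acyclic_complex_Un:
  assumes "simplicial_complex K1" "simplicial_complex K2"
    and "acyclic_complex K1" "acyclic_complex K2" "acyclic_complex (K1 \<inter> K2)"
  shows "acyclic_complex (K1 \<union> K2)"
  using assms mayer_vietoris[OF assms(1,2)] unfolding acyclic_complex_def by blast

definition complex_of :: "nat set set \<Rightarrow> nat set set" where
  "complex_of S = {\<sigma>. \<sigma> \<noteq> {} \<and> finite \<sigma> \<and> (\<exists>U\<in>S. \<sigma> \<subseteq> U)}"

lemma simplicial_complex_complex_of:
  assumes "finite S" "\<And>U. U \<in> S \<Longrightarrow> finite U"
  shows "simplicial_complex (complex_of S)"
proof (rule simplicial_complexI)
  have "complex_of S \<subseteq> (\<Union>U\<in>S. Pow U)" unfolding complex_of_def by blast
  then show "finite (complex_of S)" using assms by (simp add: finite_subset)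
qed (auto simp: complex_of_def intro: finite_subset)

lemma complex_of_insert: "complex_of (insert U S) = complex_of S \<union> complex_of {U}"
  unfolding complex_of_def by auto

lemma complex_of_Int_singleton: "complex_of S \<inter> complex_of {V} = complex_of ((\<lambda>U. U \<inter> V) ` S)"
  unfolding complex_of_def by auto

lemma complex_of_eq_UN: "complex_of S = (\<Union>U\<in>S. complex_of {U})"
  unfolding complex_of_def by auto

lemma complex_of_Un_empty: "(\<And>U. U \<in> T \<Longrightarrow> U = {}) \<Longrightarrow> complex_of (S \<union> T) = complex_of S"
  unfolding complex_of_def by auto

lemma acyclic_complex_simplex:
  assumes "finite U" "U \<noteq> {}"
  shows "acyclic_complex (complex_of {U})"
proof -
  have "Min U \<in> U" using assms by (rule Min_in)
  then have "{Min U} \<in> complex_of {U}" unfolding complex_of_def by blast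
  moreover have "reduced_homology_vanishes (complex_of {U}) j" for j
  proof (rule cone_reduced_homology_vanishes)
    show "simplicial_complex (complex_of {U})" using assms(1) by (intro simplicial_complex_complex_of) auto
    show "insert (Min U) \<sigma> \<in> complex_of {U}" if "\<sigma> \<in> complex_of {U}" for \<sigma>
      using that \<open>Min U \<in> U\<close> unfolding complex_of_def by blast
    show "Min U \<le> z" if "\<sigma> \<in> complex_of {U}" "z \<in> \<sigma>" for \<sigma> z
      using that assms(1) unfolding complex_of_def by auto
  qed
  ultimately show ?thesis unfolding acyclic_complex_def by blast
qed

section \<open>Unions of facets of a cube\<close>

text \<open>A cube is cut out of \<open>{0,1}\<^sup>n\<close> by a set \<open>G\<close> of constraints \<open>x\<^sub>l = e\<close>; a label
  \<open>(l, e)\<close> with \<open>l\<close> free in \<open>G\<close> names the facet \<open>x\<^sub>l = e\<close> of that cube.\<close>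

definition consistent :: "nat \<Rightarrow> (nat \<times> bool) set \<Rightarrow> bool" where
  "consistent n G \<longleftrightarrow> inj_on fst G \<and> fst ` G \<subseteq> {..<n}"

definition facet_labels :: "nat \<Rightarrow> (nat \<times> bool) set \<Rightarrow> (nat \<times> bool) set" where
  "facet_labels n G = {p. fst p < n \<and> fst p \<notin> fst ` G}"

definition facets :: "nat \<Rightarrow> (nat \<times> bool) set \<Rightarrow> (nat \<times> bool) set \<Rightarrow> nat set set" where
  "facets n G T = (\<lambda>p. subcube n (insert p G)) ` T"

lemma exists_bits: "\<exists>v::nat. v < 2 ^ n \<and> (\<forall>j<n. bit v j = f j)"
proof (induction n arbitrary: f)
  case (Suc n)
  obtain v :: nat where v: "v < 2 ^ n" "\<forall>j<n. bit v j = f (Suc j)"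
    using Suc[of "\<lambda>j. f (Suc j)"] by blast
  define w where "w = of_bool (f 0) + 2 * v"
  have "w < 2 ^ Suc n" using v(1) unfolding w_def by (cases "f 0") auto
  moreover have "bit w j = f j" if "j < Suc n" for j
    using that v(2) unfolding w_def by (cases j) (auto simp: bit_Suc bit_0)
  ultimately show ?case by blast
qed simp

lemma subcube_nonempty:
  assumes "consistent n G"
  shows "subcube n G \<noteq> {}"
proof -
  obtain v :: nat where v: "v < 2 ^ n" "\<forall>j<n. bit v j = ((j, True) \<in> G)"
    using exists_bits[of n "\<lambda>j. (j, True) \<in> G"] by blast
  have "bit v j = e" if "(j, e) \<in> G" for j e
  proof -
    have "j < n" using that assms unfolding consistent_def by force
    moreover have "(j, True) \<notin> G" if "\<not> e"
      using \<open>(j, e) \<in> G\<close> that assms inj_onD[of fst G "(j, True)" "(j, e)"]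
      unfolding consistent_def by force
    ultimately show ?thesis using v(2) that by (cases e) auto
  qed
  then have "v \<in> subcube n G" unfolding subcube_def using v(1) by auto
  then show ?thesis by blast
qed

lemma finite_subcube: "finite (subcube n F)"
  unfolding subcube_def by simp

lemma subcube_insert_Int:
  "subcube n (insert p G) \<inter> subcube n (insert q G) = subcube n (insert p (insert q G))"
  unfolding subcube_def by auto

lemma subcube_contradictory:
  assumes "(l, e) \<in> H" "(l, \<not> e) \<in> H"
  shows "subcube n H = {}"
proof -
  have "bit v l = e" "bit v l = (\<not> e)" if "v \<in> subcube n H" for v
    using that assms unfolding subcube_def by auto
  then show ?thesis by blast
qed

lemma finite_facet_labels: "finite (facet_labels n G)"
proof -
  have "facet_labels n G \<subseteq> {..<n} \<times> UNIV" unfolding facet_labels_def by auto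
  then show ?thesis by (rule finite_subset) simp
qed

lemma consistent_insert: "consistent n G \<Longrightarrow> p \<in> facet_labels n G \<Longrightarrow> consistent n (insert p G)"
  unfolding consistent_def facet_labels_def by auto

lemma facet_labels_insert:
  "facet_labels n (insert p G) = {q \<in> facet_labels n G. fst q \<noteq> fst p}"
  unfolding facet_labels_def by auto

lemma complex_of_facets_insert:
  "complex_of (facets n G (insert p T)) = complex_of (facets n G T) \<union> complex_of {subcube n (insert p G)}"
  unfolding facets_def image_insert by (rule complex_of_insert)

lemma simplicial_complex_facets: "finite T \<Longrightarrow> simplicial_complex (complex_of (facets n G T))"
  unfolding facets_def by (intro simplicial_complex_complex_of) (auto simp: finite_subcube)

lemma acyclic_complex_facet:
  "consistent n G \<Longrightarrow> p \<in> facet_labels n G \<Longrightarrow> acyclic_complex (complex_of {subcube n (insert p G)})"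
  by (intro acyclic_complex_simplex finite_subcube subcube_nonempty consistent_insert)

lemma complex_of_facets_Int_facet:
  assumes "T \<subseteq> facet_labels n G - {q}"
  shows "complex_of (facets n G T) \<inter> complex_of {subcube n (insert q G)}
       = complex_of (facets n (insert q G) (T \<inter> facet_labels n (insert q G)))"
proof -
  have "complex_of (facets n G T) \<inter> complex_of {subcube n (insert q G)}
      = complex_of (facets n (insert q G) T)"
    unfolding complex_of_Int_singleton facets_def image_image subcube_insert_Int ..
  also have "facets n (insert q G) T = facets n (insert q G) (T \<inter> facet_labels n (insert q G))
      \<union> facets n (insert q G) (T - facet_labels n (insert q G))"
    unfolding facets_def by blast
  also have "complex_of \<dots> = complex_of (facets n (insert q G) (T \<inter> facet_labels n (insert q G)))"
  proof (rule complex_of_Un_empty)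
    fix U assume "U \<in> facets n (insert q G) (T - facet_labels n (insert q G))"
    then obtain p where p: "p \<in> T" "fst p = fst q" "U = subcube n (insert p (insert q G))"
      using assms unfolding facets_def facet_labels_insert by auto
    then have "p = (fst q, \<not> snd q)" using assms by (cases p, cases q) auto
    with p(3) have "U = subcube n (insert (fst q, \<not> snd q) (insert q G))" by simp
    also have "\<dots> = {}" by (rule subcube_contradictory[of "fst q" "snd q"]) auto
    finally show "U = {}" .
  qed
  finally show ?thesis .
qed

lemma complex_of_facets_nonempty:
  assumes "consistent n G" "p \<in> facet_labels n G" "p \<in> T"
  shows "complex_of (facets n G T) \<noteq> {}"
proof -
  obtain v where "v \<in> subcube n (insert p G)"
    using subcube_nonempty[OF consistent_insert[OF assms(1,2)]] by blast
  then have "{v} \<in> complex_of (facets n G T)"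
    using assms(3) unfolding complex_of_def facets_def by blast
  then show ?thesis by blast
qed

lemma acyclic_complex_facets_insert:
  assumes "finite T" "consistent n G" "q \<in> facet_labels n G" "T \<subseteq> facet_labels n G - {q}"
    and "acyclic_complex (complex_of (facets n G T))"
    and "acyclic_complex (complex_of (facets n (insert q G) (T \<inter> facet_labels n (insert q G))))"
  shows "acyclic_complex (complex_of (facets n G (insert q T)))"
  unfolding complex_of_facets_insert
proof (rule acyclic_complex_Un)
  show "simplicial_complex (complex_of (facets n G T))"
    using assms(1) by (rule simplicial_complex_facets)
  show "simplicial_complex (complex_of {subcube n (insert q G)})"
    by (intro simplicial_complex_complex_of) (auto simp: finite_subcube)
  show "acyclic_complex (complex_of {subcube n (insert q G)})"
    using assms(2,3) by (rule acyclic_complex_facet)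
  show "acyclic_complex (complex_of (facets n G T) \<inter> complex_of {subcube n (insert q G)})"
    unfolding complex_of_facets_Int_facet[OF assms(4)] by (rule assms(6))
qed (rule assms(5))

lemma acyclic_complex_facets_without_opposite:
  assumes "consistent n G" "(l, e) \<in> facet_labels n G" "R \<subseteq> facet_labels n G - {(l, \<not> e)}"
  shows "acyclic_complex (complex_of (facets n G (insert (l, e) R)))"
  using assms
proof (induction "card R" arbitrary: G R rule: less_induct)
  case less
  have finR: "finite R" using less.prems(3) finite_facet_labels finite_subset by blast
  show ?case
  proof (cases "R \<subseteq> {(l, e)}")
    case True
    then have "facets n G (insert (l, e) R) = {subcube n (insert (l, e) G)}"
      unfolding facets_def by auto
    then show ?thesis using acyclic_complex_facet[OF less.prems(1,2)] by simp
  next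
    case False
    then obtain F where F: "F \<in> R" "F \<noteq> (l, e)" by blast
    define R1 where "R1 = R - {F}"
    have F_label: "F \<in> facet_labels n G" "fst F \<noteq> l"
      using F less.prems(3) by (auto simp: prod_eq_iff)
    have card_R1: "card R1 < card R" unfolding R1_def using finR F(1) by (rule card_Diff1_less)
    have "insert (l, e) R = insert F (insert (l, e) R1)" unfolding R1_def using F(1) by blast
    moreover have "acyclic_complex (complex_of (facets n G (insert F (insert (l, e) R1))))"
    proof (rule acyclic_complex_facets_insert[OF _ less.prems(1) F_label(1)])
      show "finite (insert (l, e) R1)" using finR unfolding R1_def by simp
      show "insert (l, e) R1 \<subseteq> facet_labels n G - {F}"
        using less.prems(2,3) F(2) unfolding R1_def by blast
      show "acyclic_complex (complex_of (facets n G (insert (l, e) R1)))"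
        using card_R1 less.prems less.hyps[of R1 G] unfolding R1_def by blast
      have "insert (l, e) R1 \<inter> facet_labels n (insert F G)
          = insert (l, e) (R1 \<inter> facet_labels n (insert F G))"
        using less.prems(2) F_label(2) unfolding facet_labels_insert by auto
      moreover have "acyclic_complex
          (complex_of (facets n (insert F G) (insert (l, e) (R1 \<inter> facet_labels n (insert F G)))))"
      proof (rule less.hyps)
        show "card (R1 \<inter> facet_labels n (insert F G)) < card R"
          using card_R1 finR card_mono[of R1 "R1 \<inter> facet_labels n (insert F G)"] unfolding R1_def by auto
        show "consistent n (insert F G)" using less.prems(1) F_label(1) by (rule consistent_insert)
        show "(l, e) \<in> facet_labels n (insert F G)"
          using less.prems(2) F_label(2) unfolding facet_labels_insert by auto
        show "R1 \<inter> facet_labels n (insert F G) \<subseteq> facet_labels n (insert F G) - {(l, \<not> e)}"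
          using less.prems(3) unfolding R1_def by blast
      qed
      ultimately show "acyclic_complex
          (complex_of (facets n (insert F G) (insert (l, e) R1 \<inter> facet_labels n (insert F G))))"
        by simp
    qed
    ultimately show ?thesis by simp
  qed
qed

lemma boundary_complex_decomp:
  assumes "consistent n G" "l < n" "l \<notin> fst ` G"
  obtains K1 K2 where "complex_of (facets n G (facet_labels n G)) = K1 \<union> K2"
    "simplicial_complex K1" "simplicial_complex K2" "acyclic_complex K1" "acyclic_complex K2"
    "K1 \<inter> K2 = complex_of (facets n (insert (l, False) G) (facet_labels n (insert (l, False) G)))"
proof -
  define R where "R = facet_labels n G - {(l, True), (l, False)}"
  define K1 where "K1 = complex_of (facets n G (insert (l, True) R))"
  define K2 where "K2 = complex_of {subcube n (insert (l, False) G)}"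
  have labels: "(l, True) \<in> facet_labels n G" "(l, False) \<in> facet_labels n G"
    using assms(2,3) unfolding facet_labels_def by auto
  have "facet_labels n G = insert (l, False) (insert (l, True) R)"
    using labels unfolding R_def by blast
  then have "complex_of (facets n G (facet_labels n G)) = K1 \<union> K2"
    unfolding K1_def K2_def by (simp only: complex_of_facets_insert[of n G "(l, False)"])
  moreover have "simplicial_complex K1"
    unfolding K1_def R_def using finite_facet_labels by (intro simplicial_complex_facets) auto
  moreover have "simplicial_complex K2"
    unfolding K2_def by (intro simplicial_complex_complex_of) (auto simp: finite_subcube)
  moreover have "acyclic_complex K1"
    unfolding K1_def using assms(1) labels(1) by (rule acyclic_complex_facets_without_opposite) (auto simp: R_def)
  moreover have "acyclic_complex K2"
    unfolding K2_def using assms(1) labels(2) by (rule acyclic_complex_facet)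
  moreover have "K1 \<inter> K2 = complex_of (facets n (insert (l, False) G) (facet_labels n (insert (l, False) G)))"
  proof -
    have "insert (l, True) R \<inter> facet_labels n (insert (l, False) G) = facet_labels n (insert (l, False) G)"
      unfolding R_def facet_labels_insert by auto
    moreover have "insert (l, True) R \<subseteq> facet_labels n G - {(l, False)}"
      using labels unfolding R_def by blast
    ultimately show ?thesis unfolding K1_def K2_def by (simp add: complex_of_facets_Int_facet)
  qed
  ultimately show ?thesis by (rule that)
qed

lemma boundary_complex_homology_vanishes:
  assumes "consistent n G" "j + 2 \<le> card ({..<n} - fst ` G)"
  shows "reduced_homology_vanishes (complex_of (facets n G (facet_labels n G))) j"
  using assms
proof (induction j arbitrary: G rule: less_induct)
  case (less j)
  have "card ({..<n} - fst ` G) \<noteq> 0" using less.prems(2) by linarith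
  then have "{..<n} - fst ` G \<noteq> {}" by (rule contrapos_nn) simp
  then obtain l where l: "l < n" "l \<notin> fst ` G" by blast
  define G' where "G' = insert (l, False) G"
  have cons': "consistent n G'"
    unfolding G'_def using less.prems(1) l by (intro consistent_insert) (auto simp: facet_labels_def)
  have "{..<n} - fst ` G' = ({..<n} - fst ` G) - {l}" unfolding G'_def by auto
  then have card': "card ({..<n} - fst ` G') = card ({..<n} - fst ` G) - 1"
    using l by simp
  obtain K1 K2 where K: "complex_of (facets n G (facet_labels n G)) = K1 \<union> K2"
    "simplicial_complex K1" "simplicial_complex K2" "acyclic_complex K1" "acyclic_complex K2"
    "K1 \<inter> K2 = complex_of (facets n G' (facet_labels n G'))"
    using boundary_complex_decomp[OF less.prems(1) l] unfolding G'_def by blast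
  show ?case unfolding K(1)
  proof (rule mayer_vietoris[OF K(2,3)])
    show "reduced_homology_vanishes K1 j" "reduced_homology_vanishes K2 j"
      using K(4,5) unfolding acyclic_complex_def by blast+
    show "K1 \<inter> K2 \<noteq> {}"
    proof -
      have "card ({..<n} - fst ` G') \<noteq> 0" using less.prems(2) card' by linarith
      then have "{..<n} - fst ` G' \<noteq> {}" by (rule contrapos_nn) simp
      then obtain l' where "l' < n" "l' \<notin> fst ` G'" by blast
      then have "(l', True) \<in> facet_labels n G'" unfolding facet_labels_def by simp
      with cons' show ?thesis unfolding K(6) by (intro complex_of_facets_nonempty) auto
    qed
    show "reduced_homology_vanishes (K1 \<inter> K2) i" if "j = Suc i" for i
      unfolding K(6) using that less.prems(2) card' by (intro less.IH cons') auto
  qed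
qed

section \<open>The complexes in \<open>W 4 3\<close>\<close>

lemma hamming_le_free_coordinates:
  assumes "a \<in> subcube n F" "b \<in> subcube n F"
  shows "hamming n a b \<le> card ({..<n} - fst ` F)"
proof -
  have "{j. j < n \<and> bit a j \<noteq> bit b j} \<subseteq> {..<n} - fst ` F"
    using assms unfolding subcube_def by fastforce
  then show ?thesis unfolding hamming_def by (intro card_mono) auto
qed

lemma VR_subcube_eq_complex_of:
  assumes "card ({..<n} - fst ` F) \<le> d"
  shows "VR n d (subcube n F) = complex_of {subcube n F}"
proof (intro equalityI subsetI)
  fix \<sigma> assume "\<sigma> \<in> VR n d (subcube n F)"
  then show "\<sigma> \<in> complex_of {subcube n F}" unfolding VR_def complex_of_def by blast
next
  fix \<sigma> assume "\<sigma> \<in> complex_of {subcube n F}"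
  then have "\<sigma> \<noteq> {}" "finite \<sigma>" "\<sigma> \<subseteq> subcube n F" unfolding complex_of_def by auto
  moreover have "hamming n a b \<le> d" if "a \<in> \<sigma>" "b \<in> \<sigma>" for a b
    using order_trans[OF hamming_le_free_coordinates assms] that \<open>\<sigma> \<subseteq> subcube n F\<close> by blast
  ultimately show "\<sigma> \<in> VR n d (subcube n F)" unfolding VR_def by blast
qed

lemma cube_spec_codim_one:
  assumes "cube_spec n m F" "Suc m = n"
  obtains p where "F = {p}" "p \<in> facet_labels n {}"
proof -
  have "card F = 1" "fst ` F \<subseteq> {..<n}" using assms unfolding cube_spec_def by auto
  from \<open>card F = 1\<close> obtain p where "F = {p}" by (rule card_1_singletonE)
  with \<open>fst ` F \<subseteq> {..<n}\<close> show ?thesis by (intro that) (simp_all add: facet_labels_def)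
qed

lemma singletons_eq_image_Union:
  assumes "\<And>F. F \<in> S \<Longrightarrow> \<exists>p. F = {p}"
  shows "S = (\<lambda>p. {p}) ` \<Union>S"
proof (intro equalityI subsetI)
  fix F assume "F \<in> S"
  with assms obtain p where "F = {p}" by blast
  with \<open>F \<in> S\<close> show "F \<in> (\<lambda>p. {p}) ` \<Union>S" by blast
next
  fix F assume "F \<in> (\<lambda>p. {p}) ` \<Union>S"
  then obtain p F' where "F = {p}" "p \<in> F'" "F' \<in> S" by blast
  with assms[of F'] show "F \<in> S" by auto
qed

lemma VR_facet_4: "p \<in> facet_labels 4 {} \<Longrightarrow> VR 4 3 (subcube 4 {p}) = complex_of {subcube 4 {p}}"
  by (rule VR_subcube_eq_complex_of) (simp add: facet_labels_def)

lemma UN_VR_facets_4: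
  assumes "T \<subseteq> facet_labels 4 {}"
  shows "(\<Union>p\<in>T. VR 4 3 (subcube 4 {p})) = complex_of (facets 4 {} T)"
proof -
  have "(\<Union>p\<in>T. VR 4 3 (subcube 4 {p})) = (\<Union>p\<in>T. complex_of {subcube 4 {p}})"
    using assms by (intro SUP_cong refl VR_facet_4) blast
  also have "\<dots> = complex_of (facets 4 {} T)"
    unfolding facets_def complex_of_eq_UN[of "(\<lambda>p. subcube 4 (insert p {})) ` T"] by simp
  finally show ?thesis .
qed

lemma cube_boundary_4_eq: "cube_boundary 4 {} = complex_of (facets 4 {} (facet_labels 4 {}))"
proof -
  have "{VR 4 3 (subcube 4 (insert (l, e) {})) | l e. l < 4 \<and> l \<notin> fst ` {}}
      = (\<lambda>p. VR 4 3 (subcube 4 {p})) ` facet_labels 4 {}"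
    unfolding facet_labels_def by (auto simp: image_iff)
  then show ?thesis unfolding cube_boundary_def using UN_VR_facets_4[of "facet_labels 4 {}"] by simp
qed

lemma W_D:
  assumes "X \<in> W n m" "m \<noteq> n"
  obtains S G where "\<forall>F\<in>S. cube_spec n m F" "X = (\<Union>F\<in>S. VR n 3 (subcube n F))" "cube_spec n (m + 1) G"
    "X \<noteq> cube_boundary n G \<Longrightarrow> \<exists>l e. l < n \<and> l \<notin> fst ` G
        \<and> VR n 3 (subcube n (insert (l, e) G)) \<subseteq> X \<and> \<not> VR n 3 (subcube n (insert (l, \<not> e) G)) \<subseteq> X"
proof -
  from assms(1) obtain S where S: "\<forall>F\<in>S. cube_spec n m F" "X = (\<Union>F\<in>S. VR n 3 (subcube n F))"
    and "\<exists>G. cube_spec n (m + 1) G \<and> X \<subseteq> VR n 3 (subcube n G)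
           \<and> (X \<noteq> cube_boundary n G \<longrightarrow>
               (\<exists>l e. l < n \<and> l \<notin> fst ` G
                  \<and> VR n 3 (subcube n (insert (l, e) G)) \<subseteq> X
                  \<and> \<not> VR n 3 (subcube n (insert (l, \<not> e) G)) \<subseteq> X))"
    unfolding W_def mem_Collect_eq using assms(2) by (elim exE conjE) (rule that, simp_all)
  then obtain G where G: "cube_spec n (m + 1) G" "X \<noteq> cube_boundary n G \<longrightarrow>
               (\<exists>l e. l < n \<and> l \<notin> fst ` G
                  \<and> VR n 3 (subcube n (insert (l, e) G)) \<subseteq> X
                  \<and> \<not> VR n 3 (subcube n (insert (l, \<not> e) G)) \<subseteq> X)" by (elim exE conjE)
  show ?thesis by (rule that[OF S G(1) G(2)[rule_format]])
qed

lemma union_VR_cubes_4_3: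
  assumes "\<forall>F\<in>S. cube_spec 4 3 F"
  obtains T where "T \<subseteq> facet_labels 4 {}" "(\<Union>F\<in>S. VR 4 3 (subcube 4 F)) = complex_of (facets 4 {} T)"
proof -
  have facet: "\<exists>p. F = {p} \<and> p \<in> facet_labels 4 {}" if "F \<in> S" for F
  proof -
    have "cube_spec 4 3 F" using assms that by blast
    then obtain p where "F = {p}" "p \<in> facet_labels 4 {}" by (rule cube_spec_codim_one) simp
    then show ?thesis by blast
  qed
  then have "S = (\<lambda>p. {p}) ` \<Union>S" by (intro singletons_eq_image_Union) blast
  moreover have "\<Union>S \<subseteq> facet_labels 4 {}" using facet by blast
  ultimately show ?thesis using that UN_VR_facets_4 by (metis image_image)
qed

lemma W_4_3_cases:
  assumes "X \<in> W 4 3"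
  obtains "X = complex_of (facets 4 {} (facet_labels 4 {}))"
  | l e T where "X = complex_of (facets 4 {} (insert (l, e) T))" "(l, e) \<in> facet_labels 4 {}"
      "T \<subseteq> facet_labels 4 {} - {(l, \<not> e)}"
proof -
  have "(3::nat) \<noteq> 4" by simp
  obtain S G where S: "\<forall>F\<in>S. cube_spec 4 3 F" "X = (\<Union>F\<in>S. VR 4 3 (subcube 4 F))"
    and G: "cube_spec 4 (3 + 1) G"
    and boundary: "X \<noteq> cube_boundary 4 G \<Longrightarrow> \<exists>l e. l < 4 \<and> l \<notin> fst ` G
        \<and> VR 4 3 (subcube 4 (insert (l, e) G)) \<subseteq> X \<and> \<not> VR 4 3 (subcube 4 (insert (l, \<not> e) G)) \<subseteq> X"
    by (rule W_D[OF assms \<open>3 \<noteq> 4\<close>]) (rule that)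
  have "G = {}" using G unfolding cube_spec_def by auto
  obtain T where T: "T \<subseteq> facet_labels 4 {}" and X: "X = complex_of (facets 4 {} T)"
    using union_VR_cubes_4_3[OF S(1)] unfolding S(2) by blast
  show ?thesis
  proof (cases "X = cube_boundary 4 {}")
    case True
    then show ?thesis using that(1) cube_boundary_4_eq by simp
  next
    case False
    then obtain l e where le: "l < 4" "VR 4 3 (subcube 4 {(l, e)}) \<subseteq> X"
      "\<not> VR 4 3 (subcube 4 {(l, \<not> e)}) \<subseteq> X" using boundary \<open>G = {}\<close> by auto
    then have labels: "(l, e) \<in> facet_labels 4 {}" "(l, \<not> e) \<in> facet_labels 4 {}"
      unfolding facet_labels_def by simp_all
    have "X = complex_of (facets 4 {} (insert (l, e) T))"
      using le(2) VR_facet_4[OF labels(1)] unfolding X complex_of_facets_insert by auto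
    moreover have "(l, \<not> e) \<notin> T"
    proof
      assume "(l, \<not> e) \<in> T"
      then have "complex_of {subcube 4 {(l, \<not> e)}} \<subseteq> X"
        unfolding X facets_def complex_of_def by blast
      then show False using le(3) VR_facet_4[OF labels(2)] by simp
    qed
    ultimately show ?thesis using that(2) labels(1) T by blast
  qed
qed

theorem mainTheorem17:
  fixes X :: "nat set set" and j :: nat
  assumes "X \<in> W 4 3" and "j \<le> 2"
  shows "reduced_homology_vanishes X j"
  using assms(1)
proof (cases rule: W_4_3_cases)
  case 1
  have "j + 2 \<le> card ({..<4::nat} - fst ` {})" using assms(2) by simp
  then show ?thesis unfolding 1 by (intro boundary_complex_homology_vanishes) (simp add: consistent_def)
next
  case (2 l e T)
  have "acyclic_complex X"
    unfolding 2(1) using 2(2,3) by (intro acyclic_complex_facets_without_opposite) (simp add: consistent_def)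
  then show ?thesis unfolding acyclic_complex_def by blast
qed

end
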